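(* If an nfc-transducer $\mathcal{T}=(Q,V,\Delta,q_0)$ is consistent with a BPA system $\mathcal{G}=(V,\mathit{Act},\mathcal{R})$, then $\alpha\approx_{q_0}\mathcal{T}_{q_0}(\alpha)$ for every $\alpha\in V^*$.
   Context: A BPA system $\mathcal{G}=(V,\mathit{Act},\mathcal{R})$: finite variables $V$, finite actions $\mathit{Act}$ (possibly containing silent $\tau$), rules $A\xrightarrow{a}\alpha$; LTS $\mathcal{L}_\mathcal{G}$ on $V^*$ with $A\beta\xrightarrow{a}\alpha\beta$ for rules $A\xrightarrow{a}\alpha$. Transducer $\mathcal{T}=(Q,V,\Delta,q_0)$ reading right to left, $q'\xleftarrow{A/\gamma}q$ meaning $\Delta(q,A)=(q',\gamma)$, extended to strings by $q\xleftarrow{\varepsilon/\varepsilon}q$ and composition; $\mathcal{T}_q(\alpha)$ is the output from $q$ on $\alpha$. $q$-normal form: $\varepsilon$ or $A_k\cdots A_1$ with $q_k\xleftarrow{A_k/A_k}\cdots q_1\xleftarrow{A_1/A_1}q$. nfc-transducer: each $\mathcal{T}_q(A)$ is a $q$-normal form and $q'\xleftarrow{A/\gamma}q$ implies $q'\xleftarrow{\gamma/\gamma}q$. Long moves $\alpha\overset{a}{\Rightarrow}_q\beta$: either $a=\tau$ and $\beta=\mathcal{T}_q(\alpha)$, or $\alpha=\alpha_0\xrightarrow{\tau}\cdots\xrightarrow{\tau}\alpha_k\xrightarrow{a}\beta'$ in $\mathcal{L}_\mathcal{G}$ with $\mathcal{T}_q(\alpha_0)=\cdots=\mathcal{T}_q(\alpha_k)$,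 $\mathcal{T}_q(\beta')=\beta$. $\alpha_1\approx_q\alpha_2$ iff they have the same sets of long-move results for each action. Consistency: (1) $A\approx_{q_0}\varepsilon$ if $\mathcal{T}_{q_0}(A)=\varepsilon$; (2) $A\approx_q\mathcal{T}_q(A)$ if $\mathcal{T}_q(A)\ne\varepsilon$; (3) $AC\approx_qC$ if $\mathcal{T}_q(AC)=\mathcal{T}_q(C)=C$. *)

theory Defs
  imports Main
begin

text \<open>Variables are the elements of a finite type 'v; actions live in
  a type 'a, the action set Act is an explicit finite set, and tau is the silent action
  (which may or may not belong to Act). A rule (A, a, alpha) stands for A -a-> alpha.
  Words in V* are lists, leftmost symbol first.\<close>

type_synonym ('v, 'a) rule = "'v \<times> 'a \<times> 'v list"

definition bpa :: "'a set \<Rightarrow> ('v::finite, 'a) rule set \<Rightarrow> bool" where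
  "bpa Act R \<longleftrightarrow> finite Act \<and> finite R \<and> (\<forall>(A, a, \<alpha>) \<in> R. a \<in> Act)"

definition lts_step :: "('v, 'a) rule set \<Rightarrow> 'v list \<Rightarrow> 'a \<Rightarrow> 'v list \<Rightarrow> bool" where
  "lts_step R \<alpha> a \<beta> \<longleftrightarrow> (\<exists>A \<gamma> \<delta>. \<alpha> = A # \<delta> \<and> (A, a, \<gamma>) \<in> R \<and> \<beta> = \<gamma> @ \<delta>)"

text \<open>Transducers (Q, V, Delta, q0) with Q the finite type 'q; Delta q A = (q', gamma)
  means q' <-A/gamma- q. Words are read right to left. trun Delta q alpha = (q', gamma)
  means q' <-alpha/gamma- q.\<close>
type_synonym ('q, 'v) trans = "'q \<Rightarrow> 'v \<Rightarrow> 'q \<times> 'v list"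

fun trun :: "('q, 'v) trans \<Rightarrow> 'q \<Rightarrow> 'v list \<Rightarrow> 'q \<times> 'v list" where
  "trun \<Delta> q [] = (q, [])"
| "trun \<Delta> q (A # \<alpha>) =
     (let (q1, \<gamma>1) = trun \<Delta> q \<alpha>; (q2, \<gamma>2) = \<Delta> q1 A in (q2, \<gamma>2 @ \<gamma>1))"

definition tout :: "('q, 'v) trans \<Rightarrow> 'q \<Rightarrow> 'v list \<Rightarrow> 'v list" where
  "tout \<Delta> q \<alpha> = snd (trun \<Delta> q \<alpha>)"

text \<open>q-normal form: epsilon or A_k ... A_1 with q_k <-A_k/A_k- ... q_1 <-A_1/A_1- q.
  nf_rev checks this on the reversed word A_1 ... A_k.\<close>
fun nf_rev :: "('q, 'v) trans \<Rightarrow> 'q \<Rightarrow> 'v list \<Rightarrow> bool" where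
  "nf_rev \<Delta> q [] = True"
| "nf_rev \<Delta> q (A # rs) = (snd (\<Delta> q A) = [A] \<and> nf_rev \<Delta> (fst (\<Delta> q A)) rs)"

definition q_normal :: "('q, 'v) trans \<Rightarrow> 'q \<Rightarrow> 'v list \<Rightarrow> bool" where
  "q_normal \<Delta> q \<beta> \<longleftrightarrow> nf_rev \<Delta> q (rev \<beta>)"

definition nfc :: "('q::finite, 'v::finite) trans \<Rightarrow> bool" where
  "nfc \<Delta> \<longleftrightarrow>
     (\<forall>q A. q_normal \<Delta> q (tout \<Delta> q [A])) \<and>
     (\<forall>q A q' \<gamma>. \<Delta> q A = (q', \<gamma>) \<longrightarrow> trun \<Delta> q \<gamma> = (q', \<gamma>))"

definition long_move ::
  "('v, 'a) rule set \<Rightarrow> 'a \<Rightarrow> ('q, 'v) trans \<Rightarrow> 'q \<Rightarrow> 'v list \<Rightarrow> 'a \<Rightarrow> 'v list \<Rightarrow> bool" where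
  "long_move R tau \<Delta> q \<alpha> a \<beta> \<longleftrightarrow>
     (a = tau \<and> \<beta> = tout \<Delta> q \<alpha>) \<or>
     (\<exists>xs \<beta>'. xs \<noteq> [] \<and> hd xs = \<alpha> \<and>
        (\<forall>i < length xs - 1. lts_step R (xs ! i) tau (xs ! Suc i)) \<and>
        (\<forall>i < length xs. tout \<Delta> q (xs ! i) = tout \<Delta> q \<alpha>) \<and>
        lts_step R (last xs) a \<beta>' \<and> tout \<Delta> q \<beta>' = \<beta>)"

definition lequiv ::
  "'a set \<Rightarrow> ('v, 'a) rule set \<Rightarrow> 'a \<Rightarrow> ('q, 'v) trans \<Rightarrow> 'q \<Rightarrow> 'v list \<Rightarrow> 'v list \<Rightarrow> bool" where
  "lequiv Act R tau \<Delta> q \<alpha>1 \<alpha>2 \<longleftrightarrow>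
     (\<forall>a \<in> Act. {\<beta>. long_move R tau \<Delta> q \<alpha>1 a \<beta>} = {\<beta>. long_move R tau \<Delta> q \<alpha>2 a \<beta>})"

definition consistent ::
  "'a set \<Rightarrow> ('v, 'a) rule set \<Rightarrow> 'a \<Rightarrow> ('q, 'v) trans \<Rightarrow> 'q \<Rightarrow> bool" where
  "consistent Act R tau \<Delta> q0 \<longleftrightarrow>
     (\<forall>A. tout \<Delta> q0 [A] = [] \<longrightarrow> lequiv Act R tau \<Delta> q0 [A] []) \<and>
     (\<forall>q A. tout \<Delta> q [A] \<noteq> [] \<longrightarrow> lequiv Act R tau \<Delta> q [A] (tout \<Delta> q [A])) \<and>
     (\<forall>q A C. tout \<Delta> q [A, C] = [C] \<and> tout \<Delta> q [C] = [C]
        \<longrightarrow> lequiv Act R tau \<Delta> q [A, C] [C])"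

end

theory Submission
  imports Defs
begin

text \<open>Induct on \<open>\<alpha>\<close>, peeling off its leftmost symbol: if \<open>p\<close> is the state reached on \<open>\<alpha>\<close>
  and \<open>\<delta> = T\<^sub>q\<^sub>0(\<alpha>)\<close>, then \<open>T\<^sub>q\<^sub>0(A\<alpha>) = T\<^sub>p(A) \<delta>\<close>. A long move of a word \<open>\<alpha>\<delta>\<close> is either a
  long move of \<open>\<alpha>\<close> from the state reached on \<open>\<delta>\<close>, followed by the output of \<open>\<delta>\<close>, or, when
  \<open>\<alpha>\<close> can be silently erased, a long move of \<open>\<delta>\<close>. Hence \<open>\<approx>\<close> is preserved by prepending a
  word to two words with the same run, and by appending a word to two non-erasable words.
  So it suffices that \<open>A\<delta> \<approx>\<^sub>q\<^sub>0 T\<^sub>p(A)\<delta>\<close>: this is consistency (2) if \<open>T\<^sub>p(A) \<noteq> \<epsilon>\<close>, consistency (1)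
  if \<open>T\<^sub>p(A) = \<delta> = \<epsilon>\<close>, and otherwise consistency (3) for the first symbol \<open>C\<close> of \<open>\<delta>\<close>, which
  by normality is copied by a transition into \<open>p\<close>.\<close>

lemma rtranclp_iff_successively:
  "r\<^sup>*\<^sup>* x z \<longleftrightarrow> (\<exists>xs. xs \<noteq> [] \<and> hd xs = x \<and> last xs = z \<and> successively r xs)"
proof
  assume "r\<^sup>*\<^sup>* x z"
  then show "\<exists>xs. xs \<noteq> [] \<and> hd xs = x \<and> last xs = z \<and> successively r xs"
  proof (induction rule: converse_rtranclp_induct)
    case base
    show ?case by (intro exI[of _ "[z]"]) simp
  next
    case (step x y)
    then obtain xs where "xs \<noteq> []" "hd xs = y" "last xs = z" "successively r xs" by blast
    with step.hyps(1) show ?case by (intro exI[of _ "x # xs"]) (auto simp: successively_Cons)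
  qed
next
  assume "\<exists>xs. xs \<noteq> [] \<and> hd xs = x \<and> last xs = z \<and> successively r xs"
  then obtain xs where "xs \<noteq> []" "hd xs = x" "last xs = z" "successively r xs" by blast
  then show "r\<^sup>*\<^sup>* x z"
  proof (induction xs arbitrary: x)
    case Nil
    then show ?case by simp
  next
    case (Cons y xs)
    then show ?case
      by (cases "xs = []") (auto simp: successively_Cons intro: converse_rtranclp_into_rtranclp)
  qed
qed

lemma successively_eq_iff_all_eq_hd:
  "successively (\<lambda>x y. f y = f x) xs \<longleftrightarrow> (\<forall>y\<in>set xs. f y = f (hd xs))"
proof (induction xs)
  case (Cons x xs)
  then show ?case by (cases xs) auto
qed simp

lemma trun_Cons_eq [simp]:
  "trun \<Delta> q (A # \<alpha>) =
     (fst (\<Delta> (fst (trun \<Delta> q \<alpha>)) A), snd (\<Delta> (fst (trun \<Delta> q \<alpha>)) A) @ snd (trun \<Delta> q \<alpha>))"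
  by (simp add: split_def Let_def)

declare trun.simps(2) [simp del]

lemma trun_append_fst: "fst (trun \<Delta> q (xs @ ys)) = fst (trun \<Delta> (fst (trun \<Delta> q ys)) xs)"
  by (induction xs) auto

lemma trun_append_snd:
  "snd (trun \<Delta> q (xs @ ys)) = snd (trun \<Delta> (fst (trun \<Delta> q ys)) xs) @ snd (trun \<Delta> q ys)"
  by (induction xs) (auto simp: trun_append_fst)

lemma tout_append: "tout \<Delta> q (xs @ ys) = tout \<Delta> (fst (trun \<Delta> q ys)) xs @ tout \<Delta> q ys"
  by (simp add: tout_def trun_append_snd)

lemma tout_Nil [simp]: "tout \<Delta> q [] = []"
  by (simp add: tout_def)

lemma nfc_trun_output: "nfc \<Delta> \<Longrightarrow> trun \<Delta> q (snd (\<Delta> q A)) = \<Delta> q A"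
  unfolding nfc_def by (metis prod.collapse)

lemma nfc_trun_tout: "nfc \<Delta> \<Longrightarrow> trun \<Delta> q (tout \<Delta> q \<alpha>) = trun \<Delta> q \<alpha>"
proof (induction \<alpha>)
  case (Cons A \<alpha>)
  then show ?case
    using nfc_trun_output[OF Cons.prems, of "fst (trun \<Delta> q \<alpha>)" A]
    by (simp add: tout_def prod_eq_iff trun_append_fst trun_append_snd)
qed (simp add: tout_def)

lemma nfc_trun_append_tout: "nfc \<Delta> \<Longrightarrow> trun \<Delta> q (xs @ tout \<Delta> q ys) = trun \<Delta> q (xs @ ys)"
  using nfc_trun_tout[of \<Delta> q ys]
  by (simp add: prod_eq_iff trun_append_fst trun_append_snd tout_def)

lemma nfc_tout_Nil_state: "nfc \<Delta> \<Longrightarrow> tout \<Delta> q \<alpha> = [] \<Longrightarrow> fst (trun \<Delta> q \<alpha>) = q"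
  using nfc_trun_tout[of \<Delta> q \<alpha>] by (simp add: tout_def) (metis fst_conv)

lemma nf_rev_rev_append:
  "nf_rev \<Delta> q (rev w @ ys) \<longleftrightarrow> q_normal \<Delta> q w \<and> nf_rev \<Delta> (fst (trun \<Delta> q w)) ys"
proof (induction w arbitrary: ys)
  case (Cons C w)
  from Cons.IH[of "C # ys"] Cons.IH[of "[C]"] show ?case
    by (simp add: q_normal_def)
qed (simp add: q_normal_def)

lemma q_normal_append:
  "q_normal \<Delta> q (xs @ ys) \<longleftrightarrow> q_normal \<Delta> q ys \<and> q_normal \<Delta> (fst (trun \<Delta> q ys)) xs"
  using nf_rev_rev_append[of \<Delta> q ys "rev xs"] by (simp add: q_normal_def)

lemma nfc_q_normal_tout: "nfc \<Delta> \<Longrightarrow> q_normal \<Delta> q (tout \<Delta> q \<alpha>)"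
proof (induction \<alpha>)
  case (Cons A \<alpha>)
  have "q_normal \<Delta> (fst (trun \<Delta> q \<alpha>)) (tout \<Delta> (fst (trun \<Delta> q \<alpha>)) [A])"
    using Cons.prems unfolding nfc_def by blast
  with Cons nfc_trun_tout[OF Cons.prems, of q \<alpha>] show ?case
    using tout_append[of \<Delta> q "[A]" \<alpha>] by (simp add: q_normal_append)
qed (simp add: q_normal_def)

lemma nfc_tout_Cons_step:
  assumes "nfc \<Delta>" and "tout \<Delta> q \<alpha> = C # w"
  shows "\<Delta> (fst (trun \<Delta> q w)) C = (fst (trun \<Delta> q \<alpha>), [C])"
proof -
  have "q_normal \<Delta> q ([C] @ w)"
    using nfc_q_normal_tout[OF assms(1), of q \<alpha>] assms(2) by simp
  then have "snd (\<Delta> (fst (trun \<Delta> q w)) C) = [C]"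
    unfolding q_normal_append by (simp add: q_normal_def)
  moreover have "fst (trun \<Delta> q (C # w)) = fst (trun \<Delta> q \<alpha>)"
    using nfc_trun_tout[OF assms(1), of q \<alpha>] assms(2) by (simp add: tout_def)
  ultimately show ?thesis by (simp add: prod_eq_iff)
qed

definition silent_step ::
  "('v, 'a) rule set \<Rightarrow> 'a \<Rightarrow> ('q, 'v) trans \<Rightarrow> 'q \<Rightarrow> 'v list \<Rightarrow> 'v list \<Rightarrow> bool" where
  "silent_step R tau \<Delta> q \<alpha> \<beta> \<longleftrightarrow> lts_step R \<alpha> tau \<beta> \<and> tout \<Delta> q \<beta> = tout \<Delta> q \<alpha>"

abbreviation silent_path ::
  "('v, 'a) rule set \<Rightarrow> 'a \<Rightarrow> ('q, 'v) trans \<Rightarrow> 'q \<Rightarrow> 'v list \<Rightarrow> 'v list \<Rightarrow> bool" where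
  "silent_path R tau \<Delta> q \<equiv> (silent_step R tau \<Delta> q)\<^sup>*\<^sup>*"

lemma silent_path_iff_chain:
  "silent_path R tau \<Delta> q \<alpha> \<alpha>' \<longleftrightarrow>
     (\<exists>xs. xs \<noteq> [] \<and> hd xs = \<alpha> \<and> last xs = \<alpha>' \<and>
        (\<forall>i < length xs - 1. lts_step R (xs ! i) tau (xs ! Suc i)) \<and>
        (\<forall>i < length xs. tout \<Delta> q (xs ! i) = tout \<Delta> q \<alpha>))"
proof -
  have successively_silent_step:
    "successively (silent_step R tau \<Delta> q) xs \<longleftrightarrow>
       successively (\<lambda>x y. lts_step R x tau y) xs \<and>
       (\<forall>i<length xs. tout \<Delta> q (xs ! i) = tout \<Delta> q (hd xs))" for xs
    using successively_eq_iff_all_eq_hd[of "tout \<Delta> q" xs]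
    by (auto simp: silent_step_def successively_conv_nth all_set_conv_all_nth)
  show ?thesis
    unfolding rtranclp_iff_successively successively_silent_step
    unfolding successively_conv_nth
    by (intro iff_exI) (auto simp: less_diff_conv)
qed

lemma long_move_iff:
  "long_move R tau \<Delta> q \<alpha> a \<beta> \<longleftrightarrow> (a = tau \<and> \<beta> = tout \<Delta> q \<alpha>) \<or>
     (\<exists>\<alpha>' \<beta>'. silent_path R tau \<Delta> q \<alpha> \<alpha>' \<and> lts_step R \<alpha>' a \<beta>' \<and> tout \<Delta> q \<beta>' = \<beta>)"
  unfolding long_move_def silent_path_iff_chain by blast

lemma silent_path_tout: "silent_path R tau \<Delta> q \<alpha> \<beta> \<Longrightarrow> tout \<Delta> q \<beta> = tout \<Delta> q \<alpha>"
  by (induction rule: rtranclp_induct) (auto simp: silent_step_def)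

lemma lts_step_Nil [simp]: "\<not> lts_step R [] a \<beta>"
  by (simp add: lts_step_def)

lemma lts_step_append:
  "\<alpha> \<noteq> [] \<Longrightarrow> lts_step R (\<alpha> @ \<delta>) a \<beta> \<longleftrightarrow> (\<exists>\<beta>0. lts_step R \<alpha> a \<beta>0 \<and> \<beta> = \<beta>0 @ \<delta>)"
  by (cases \<alpha>) (auto simp: lts_step_def)

lemma silent_step_append_iff:
  assumes "\<alpha> \<noteq> []" and "p = fst (trun \<Delta> q \<delta>)"
  shows "silent_step R tau \<Delta> q (\<alpha> @ \<delta>) \<beta> \<longleftrightarrow> (\<exists>\<alpha>'. \<beta> = \<alpha>' @ \<delta> \<and> silent_step R tau \<Delta> p \<alpha> \<alpha>')"
  using assms by (auto simp: silent_step_def lts_step_append tout_append)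

lemma silent_path_append:
  assumes "silent_path R tau \<Delta> p \<alpha> \<alpha>'" and "p = fst (trun \<Delta> q \<delta>)"
  shows "silent_path R tau \<Delta> q (\<alpha> @ \<delta>) (\<alpha>' @ \<delta>)"
  using assms(1)
proof (induction rule: rtranclp_induct)
  case (step \<alpha>1 \<alpha>2)
  then have "\<alpha>1 \<noteq> []" by (auto simp: silent_step_def)
  with step assms(2) show ?case
    by (meson rtranclp.rtrancl_into_rtrancl silent_step_append_iff)
qed simp

lemma silent_path_append_cases:
  assumes "silent_path R tau \<Delta> q (\<alpha> @ \<delta>) w" and "p = fst (trun \<Delta> q \<delta>)"
  shows "(\<exists>\<alpha>'. w = \<alpha>' @ \<delta> \<and> silent_path R tau \<Delta> p \<alpha> \<alpha>') \<or>
    (silent_path R tau \<Delta> p \<alpha> [] \<and> silent_path R tau \<Delta> q \<delta> w)"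
  using assms(1)
proof (induction "\<alpha> @ \<delta>" arbitrary: \<alpha> rule: converse_rtranclp_induct)
  case base
  then show ?case by (auto intro!: exI[of _ \<alpha>])
next
  case (step y)
  show ?case
  proof (cases "\<alpha> = []")
    case True
    then have "silent_path R tau \<Delta> q \<delta> w"
      using step.hyps(1,2) by (simp add: converse_rtranclp_into_rtranclp)
    with True show ?thesis by simp
  next
    case False
    from silent_step_append_iff[OF False assms(2), THEN iffD1, OF step.hyps(1)]
    obtain \<alpha>1 where y: "y = \<alpha>1 @ \<delta>" and \<alpha>1: "silent_step R tau \<Delta> p \<alpha> \<alpha>1"
      by blast
    have "silent_path R tau \<Delta> p \<alpha> \<alpha>'" if "silent_path R tau \<Delta> p \<alpha>1 \<alpha>'" for \<alpha>'
      using \<alpha>1 that by (rule converse_rtranclp_into_rtranclp)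
    with step.hyps(3)[OF y] show ?thesis by blast
  qed
qed

lemma long_move_appendD:
  assumes p: "p = fst (trun \<Delta> q \<delta>)" and "long_move R tau \<Delta> q (\<alpha> @ \<delta>) a \<beta>"
  shows "(\<exists>\<beta>0. long_move R tau \<Delta> p \<alpha> a \<beta>0 \<and> \<beta> = \<beta>0 @ tout \<Delta> q \<delta>) \<or>
    (silent_path R tau \<Delta> p \<alpha> [] \<and> long_move R tau \<Delta> q \<delta> a \<beta>)"
proof -
  consider (tau) "a = tau" "\<beta> = tout \<Delta> q (\<alpha> @ \<delta>)"
    | (move) w \<beta>' where "silent_path R tau \<Delta> q (\<alpha> @ \<delta>) w" "lts_step R w a \<beta>'" "tout \<Delta> q \<beta>' = \<beta>"
    using assms(2) unfolding long_move_iff by blast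
  then show ?thesis
  proof cases
    case tau
    with p show ?thesis by (auto simp: long_move_iff tout_append)
  next
    case move
    from silent_path_append_cases[OF move(1) p] show ?thesis
    proof (elim disjE exE conjE)
      fix \<alpha>' assume w: "w = \<alpha>' @ \<delta>" and path: "silent_path R tau \<Delta> p \<alpha> \<alpha>'"
      show ?thesis
      proof (cases "\<alpha>' = []")
        case True
        with w path move show ?thesis by (auto simp: long_move_iff)
      next
        case False
        with move(2) w obtain \<beta>0 where "lts_step R \<alpha>' a \<beta>0" and "\<beta>' = \<beta>0 @ \<delta>"
          by (auto simp: lts_step_append)
        with path move(3) p show ?thesis by (auto simp: long_move_iff tout_append)
      qed
    next
      assume "silent_path R tau \<Delta> p \<alpha> []" and "silent_path R tau \<Delta> q \<delta> w"
      with move show ?thesis by (auto simp: long_move_iff)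
    qed
  qed
qed

lemma long_move_append_within:
  assumes p: "p = fst (trun \<Delta> q \<delta>)" and "long_move R tau \<Delta> p \<alpha> a \<beta>"
  shows "long_move R tau \<Delta> q (\<alpha> @ \<delta>) a (\<beta> @ tout \<Delta> q \<delta>)"
proof -
  consider (tau) "a = tau" "\<beta> = tout \<Delta> p \<alpha>"
    | (move) \<alpha>' \<beta>' where "silent_path R tau \<Delta> p \<alpha> \<alpha>'" "lts_step R \<alpha>' a \<beta>'" "tout \<Delta> p \<beta>' = \<beta>"
    using assms(2) unfolding long_move_iff by blast
  then show ?thesis
  proof cases
    case tau
    with p show ?thesis by (simp add: long_move_iff tout_append)
  next
    case move
    then have "\<alpha>' \<noteq> []" by auto
    with move(2) have "lts_step R (\<alpha>' @ \<delta>) a (\<beta>' @ \<delta>)" by (auto simp: lts_step_append)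
    moreover have "silent_path R tau \<Delta> q (\<alpha> @ \<delta>) (\<alpha>' @ \<delta>)"
      using silent_path_append[OF move(1) p] .
    moreover have "tout \<Delta> q (\<beta>' @ \<delta>) = \<beta> @ tout \<Delta> q \<delta>"
      using move(3) p by (simp add: tout_append)
    ultimately show ?thesis unfolding long_move_iff by blast
  qed
qed

lemma long_move_append_erased:
  assumes p: "p = fst (trun \<Delta> q \<delta>)" and erased: "silent_path R tau \<Delta> p \<alpha> []"
    and "long_move R tau \<Delta> q \<delta> a \<beta>"
  shows "long_move R tau \<Delta> q (\<alpha> @ \<delta>) a \<beta>"
proof -
  have path: "silent_path R tau \<Delta> q (\<alpha> @ \<delta>) \<delta>"
    using silent_path_append[OF erased p] by simp
  have "tout \<Delta> p \<alpha> = []"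
    using silent_path_tout[OF erased] by simp
  with p have "tout \<Delta> q (\<alpha> @ \<delta>) = tout \<Delta> q \<delta>"
    by (simp add: tout_append)
  with assms(3) path show ?thesis
    unfolding long_move_iff by (metis rtranclp_trans)
qed

lemma long_move_append_iff:
  assumes "p = fst (trun \<Delta> q \<delta>)"
  shows "long_move R tau \<Delta> q (\<alpha> @ \<delta>) a \<beta> \<longleftrightarrow>
    (\<exists>\<beta>0. long_move R tau \<Delta> p \<alpha> a \<beta>0 \<and> \<beta> = \<beta>0 @ tout \<Delta> q \<delta>) \<or>
    (silent_path R tau \<Delta> p \<alpha> [] \<and> long_move R tau \<Delta> q \<delta> a \<beta>)"
  using long_move_appendD[OF assms, of R tau \<alpha> a \<beta>] long_move_append_within[OF assms, of R tau \<alpha> a]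
    long_move_append_erased[OF assms, of R tau \<alpha> a \<beta>] by blast

lemma lequiv_trans:
  "lequiv Act R tau \<Delta> q \<alpha>1 \<alpha>2 \<Longrightarrow> lequiv Act R tau \<Delta> q \<alpha>2 \<alpha>3 \<Longrightarrow> lequiv Act R tau \<Delta> q \<alpha>1 \<alpha>3"
  by (simp add: lequiv_def)

lemma lequiv_append_left:
  assumes "lequiv Act R tau \<Delta> q X Y" and "trun \<Delta> q X = trun \<Delta> q Y"
  shows "lequiv Act R tau \<Delta> q (B @ X) (B @ Y)"
  using assms unfolding lequiv_def set_eq_iff mem_Collect_eq
  by (simp add: long_move_append_iff[OF refl] tout_def)

lemma lequiv_append_right:
  assumes "lequiv Act R tau \<Delta> p X Y" and "tout \<Delta> p X \<noteq> []" and "tout \<Delta> p Y \<noteq> []"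
    and "p = fst (trun \<Delta> q \<delta>)"
  shows "lequiv Act R tau \<Delta> q (X @ \<delta>) (Y @ \<delta>)"
proof -
  have "\<not> silent_path R tau \<Delta> p Z []" if "tout \<Delta> p Z \<noteq> []" for Z
    using that silent_path_tout by fastforce
  with assms show ?thesis
    unfolding lequiv_def set_eq_iff mem_Collect_eq
    by (simp add: long_move_append_iff[OF assms(4)])
qed

lemma lequiv_Cons_tout:
  assumes nfc: "nfc \<Delta>" and cons: "consistent Act R tau \<Delta> q0"
  shows "lequiv Act R tau \<Delta> q0 (A # tout \<Delta> q0 \<alpha>) (tout \<Delta> q0 (A # \<alpha>))"
proof -
  define p where "p = fst (trun \<Delta> q0 \<alpha>)"
  define \<delta> where "\<delta> = tout \<Delta> q0 \<alpha>"
  have p_\<delta>: "p = fst (trun \<Delta> q0 \<delta>)"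
    using nfc_trun_tout[OF nfc, of q0 \<alpha>] by (simp add: p_def \<delta>_def tout_def)
  have out: "tout \<Delta> q0 (A # \<alpha>) = tout \<Delta> p [A] @ \<delta>"
    using tout_append[of \<Delta> q0 "[A]" \<alpha>] by (simp add: p_def \<delta>_def)
  consider (kept) "tout \<Delta> p [A] \<noteq> []"
    | (erased_last) "tout \<Delta> p [A] = []" and "\<delta> = []"
    | (erased) C w where "tout \<Delta> p [A] = []" and "\<delta> = C # w"
    by (cases \<delta>) auto
  then show ?thesis
  proof cases
    case kept
    have "lequiv Act R tau \<Delta> p [A] (tout \<Delta> p [A])"
      using cons kept unfolding consistent_def by blast
    moreover have "tout \<Delta> p (tout \<Delta> p [A]) = tout \<Delta> p [A]"
      using nfc_trun_tout[OF nfc, of p "[A]"] by (simp add: tout_def)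
    ultimately have "lequiv Act R tau \<Delta> q0 ([A] @ \<delta>) (tout \<Delta> p [A] @ \<delta>)"
      using kept p_\<delta> by (intro lequiv_append_right) simp_all
    with out show ?thesis by (simp add: \<delta>_def)
  next
    case erased_last
    have "p = q0"
      using nfc_tout_Nil_state[OF nfc] erased_last(2) by (simp add: p_def \<delta>_def)
    with erased_last cons have "lequiv Act R tau \<Delta> q0 [A] []"
      unfolding consistent_def by blast
    with erased_last out show ?thesis by (simp add: \<delta>_def)
  next
    case erased
    define q' where "q' = fst (trun \<Delta> q0 w)"
    have "\<Delta> q' C = (p, [C])"
      using nfc_tout_Cons_step[OF nfc erased(2)[unfolded \<delta>_def]] by (simp add: q'_def p_def)
    with erased(1) have AC: "tout \<Delta> q' [A, C] = [C]" and C: "tout \<Delta> q' [C] = [C]"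
      by (simp_all add: tout_def)
    with cons have "lequiv Act R tau \<Delta> q' [A, C] [C]"
      unfolding consistent_def by blast
    then have "lequiv Act R tau \<Delta> q0 ([A, C] @ w) ([C] @ w)"
      by (rule lequiv_append_right) (simp_all add: AC C q'_def[symmetric])
    with erased out show ?thesis by (simp add: \<delta>_def)
  qed
qed

lemma lequiv_append_tout:
  assumes nfc: "nfc \<Delta>" and cons: "consistent Act R tau \<Delta> q0"
  shows "lequiv Act R tau \<Delta> q0 (B @ \<alpha>) (B @ tout \<Delta> q0 \<alpha>)"
proof (induction \<alpha> arbitrary: B)
  case Nil
  show ?case by (simp add: lequiv_def)
next
  case (Cons A \<alpha>)
  have "lequiv Act R tau \<Delta> q0 (B @ A # \<alpha>) (B @ A # tout \<Delta> q0 \<alpha>)"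
    using Cons.IH[of "B @ [A]"] by simp
  moreover have "trun \<Delta> q0 (A # tout \<Delta> q0 \<alpha>) = trun \<Delta> q0 (tout \<Delta> q0 (A # \<alpha>))"
    using nfc_trun_append_tout[OF nfc, of q0 "[A]" \<alpha>] nfc_trun_tout[OF nfc, of q0 "A # \<alpha>"] by simp
  then have "lequiv Act R tau \<Delta> q0 (B @ A # tout \<Delta> q0 \<alpha>) (B @ tout \<Delta> q0 (A # \<alpha>))"
    using lequiv_append_left[OF lequiv_Cons_tout[OF nfc cons]] by simp
  ultimately show ?case by (rule lequiv_trans)
qed

theorem mainTheorem6:
  fixes Act :: "'a set" and R :: "('v::finite, 'a) rule set" and tau :: 'a
    and \<Delta> :: "('q::finite, 'v) trans" and q0 :: 'q
  assumes "bpa Act R"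
    and "nfc \<Delta>"
    and "consistent Act R tau \<Delta> q0"
  shows "\<forall>\<alpha>. lequiv Act R tau \<Delta> q0 \<alpha> (tout \<Delta> q0 \<alpha>)"
  using lequiv_append_tout[OF assms(2,3), of "[]"] by simp

end
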